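(* Let $p$ be a prime and $c_1,\dots,c_n$ distinct nonzero integers. Let $M(c_1,\dots,c_n)$ be the $n\times n$ matrix whose $(k,i)$ entry is $c_i^{p^{k-1}}$ ($k,i=1,\dots,n$). Then the columns of $M(c_1,\dots,c_n)$ are $\mathbb Z$-linearly independent in each of the following cases: (1) all $c_i$ are positive; (2) $p\neq2$ and the $|c_i|$ are distinct, i.e. $c_i\ne -c_j$ for all $i\ne j$. *)

theory Defs
  imports "HOL-Computational_Algebra.Primes"
begin

definition Mmat :: "nat \<Rightarrow> (nat \<Rightarrow> int) \<Rightarrow> nat \<Rightarrow> nat \<Rightarrow> int" where
  "Mmat p c k i = c i ^ (p ^ (k - 1))"

definition cols_Z_lin_indep :: "nat \<Rightarrow> (nat \<Rightarrow> nat \<Rightarrow> int) \<Rightarrow> bool" where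
  "cols_Z_lin_indep n A \<longleftrightarrow>
     (\<forall>a :: nat \<Rightarrow> int. (\<forall>k\<in>{1..n}. (\<Sum>i=1..n. a i * A k i) = 0) \<longrightarrow> (\<forall>i\<in>{1..n}. a i = 0))"

end

theory Submission
  imports Defs Complex_Main
begin

text \<open>Writing \<open>c\<^sub>i ^ p\<^sup>k = sgn c\<^sub>i * exp (ln \<bar>c\<^sub>i\<bar> * p\<^sup>k)\<close>, which needs \<open>c\<^sub>i > 0\<close> or \<open>p\<close> odd,
  a vanishing integer combination of the columns becomes an exponential sum
  \<open>\<Sum>\<^sub>i b\<^sub>i exp (l\<^sub>i x)\<close> with distinct frequencies \<open>l\<^sub>i = ln \<bar>c\<^sub>i\<bar>\<close> vanishing at the \<open>n\<close> points
  \<open>x = 1 < p < \<dots> < p ^ (n - 1)\<close>. A nonzero exponential sum with \<open>n\<close> terms has at most \<open>n - 1\<close>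
  real zeros: after dividing by one exponential, Rolle's theorem yields a sum with one term
  less vanishing at \<open>n - 1\<close> interlacing points.\<close>

lemma Rolle_interlacing:
  fixes t :: "nat \<Rightarrow> real" and g g' :: "real \<Rightarrow> real"
  assumes deriv: "\<And>x. (g has_real_derivative g' x) (at x)"
    and incr: "\<And>j. j < m \<Longrightarrow> t j < t (Suc j)"
    and zeros: "\<And>j. j \<le> m \<Longrightarrow> g (t j) = 0"
  obtains s where "\<And>j. j < m \<Longrightarrow> t j < s j \<and> s j < t (Suc j) \<and> g' (s j) = 0"
proof -
  have "\<exists>s. t j < s \<and> s < t (Suc j) \<and> g' s = 0" if "j < m" for j
  proof -
    have "continuous_on {t j..t (Suc j)} g"
      using deriv by (meson DERIV_isCont continuous_at_imp_continuous_on)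
    moreover have "\<And>x. g differentiable (at x)"
      using deriv real_differentiable_def by blast
    moreover have "g (t j) = g (t (Suc j))"
      using zeros that by simp
    ultimately obtain s where "t j < s" "s < t (Suc j)" "(g has_real_derivative 0) (at s)"
      using Rolle incr \<open>j < m\<close> by blast
    then show ?thesis
      using deriv DERIV_unique by blast
  qed
  then show ?thesis
    using that by metis
qed

lemma exp_sum_zeros_imp_coeffs_zero:
  fixes a l :: "'i \<Rightarrow> real" and t :: "nat \<Rightarrow> real"
  assumes "finite I" "inj_on l I"
    and "\<And>j. Suc j < card I \<Longrightarrow> t j < t (Suc j)"
    and "\<And>j. j < card I \<Longrightarrow> (\<Sum>i\<in>I. a i * exp (l i * t j)) = 0"
    and "i \<in> I"
  shows "a i = 0"
  using assms
proof (induction I arbitrary: a l t i rule: finite_induct)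
  case empty
  then show ?case by simp
next
  case (insert m I)
  define g where "g x = (\<Sum>i\<in>insert m I. a i * exp ((l i - l m) * x))" for x
  define g' where "g' x = (\<Sum>i\<in>insert m I. a i * (l i - l m) * exp ((l i - l m) * x))" for x
  have deriv: "(g has_real_derivative g' x) (at x)" for x
    unfolding g_def[abs_def] g'_def by (intro derivative_eq_intros) auto
  have card: "card (insert m I) = Suc (card I)"
    using insert.hyps by simp
  have "g (t j) = exp (- l m * t j) * (\<Sum>i\<in>insert m I. a i * exp (l i * t j))" for j
    unfolding g_def by (simp add: sum_distrib_left algebra_simps flip: exp_add)
  then have "g (t j) = 0" if "j \<le> card I" for j
    using insert.prems(3) that card by simp
  then obtain s where s: "\<And>j. j < card I \<Longrightarrow> t j < s j \<and> s j < t (Suc j) \<and> g' (s j) = 0"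
    using Rolle_interlacing[OF deriv] insert.prems(2) card by (metis Suc_mono)
  have distinct: "l i \<noteq> l m" if "i \<in> I" for i
    using insert.prems(1) insert.hyps that by (auto simp: inj_on_def)
  have "a i * (l i - l m) = 0" if "i \<in> I" for i
  proof (rule insert.IH[where a = "\<lambda>i. a i * (l i - l m)" and l = "\<lambda>i. l i - l m" and t = s])
    show "inj_on (\<lambda>i. l i - l m) I"
      using insert.prems(1) by (auto simp: inj_on_def)
    show "s j < s (Suc j)" if "Suc j < card I" for j
      using s[of j] s[of "Suc j"] that by fastforce
    show "(\<Sum>i\<in>I. a i * (l i - l m) * exp ((l i - l m) * s j)) = 0" if "j < card I" for j
      using s[OF that] insert.hyps by (simp add: g'_def)
  qed (use that in simp)
  then have rest: "a i = 0" if "i \<in> I" for i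
    using distinct that by simp
  then have "a m * exp (l m * t 0) = 0"
    using insert.prems(3)[of 0] insert.hyps by (simp add: card)
  then show ?case
    using rest insert.prems(4) by auto
qed

lemma power_eq_sgn_mult_abs_power:
  fixes c :: "'a :: linordered_idom"
  assumes "0 < c \<or> odd N"
  shows "c ^ N = sgn c * \<bar>c\<bar> ^ N"
  using assms
proof
  assume "odd N"
  then show ?thesis
    by (cases c "0::'a" rule: linorder_cases) (simp_all add: odd_pos)
qed simp

lemma of_int_power_eq_sgn_mult_exp_ln:
  fixes c :: int
  assumes "c \<noteq> 0" and "0 < c \<or> odd N"
  shows "real_of_int (c ^ N) = real_of_int (sgn c) * exp (ln \<bar>real_of_int c\<bar> * N)"
proof -
  have "exp (ln \<bar>real_of_int c\<bar> * N) = \<bar>real_of_int c\<bar> ^ N"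
    using assms(1) by (simp add: mult.commute exp_of_nat_mult)
  then show ?thesis
    using power_eq_sgn_mult_abs_power[OF assms(2)] by simp
qed

lemma inj_on_abs_if_positive_or_no_opposites:
  fixes c :: "'i \<Rightarrow> 'a :: linordered_idom"
  assumes "inj_on c A"
    and "(\<forall>i\<in>A. 0 < c i) \<or> (\<forall>i\<in>A. \<forall>j\<in>A. i \<noteq> j \<longrightarrow> c i \<noteq> - c j)"
  shows "inj_on (\<lambda>i. \<bar>c i\<bar>) A"
proof (rule inj_onI)
  fix i j assume ij: "i \<in> A" "j \<in> A" "\<bar>c i\<bar> = \<bar>c j\<bar>"
  then consider "c i = c j" | "c i = - c j"
    by (auto simp: abs_eq_iff)
  then show "i = j"
  proof cases
    case 1
    then show ?thesis
      using assms(1) ij by (simp add: inj_on_eq_iff)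
  next
    case 2
    then show ?thesis
      using assms(2) ij by (metis neg_less_0_iff_less order_less_imp_not_less)
  qed
qed

lemma inj_on_ln_abs_of_int:
  fixes c :: "'i \<Rightarrow> int"
  assumes "inj_on (\<lambda>i. \<bar>c i\<bar>) A" and "\<forall>i\<in>A. c i \<noteq> 0"
  shows "inj_on (\<lambda>i. ln \<bar>real_of_int (c i)\<bar>) A"
proof (rule inj_onI)
  fix i j assume ij: "i \<in> A" "j \<in> A"
    and "ln \<bar>real_of_int (c i)\<bar> = ln \<bar>real_of_int (c j)\<bar>"
  then have "\<bar>c i\<bar> = \<bar>c j\<bar>"
    using assms(2) by (simp add: ln_inj_iff)
  then show "i = j"
    using inj_onD[OF assms(1) _ ij] by simp
qed

lemma of_int_Mmat_row_combination:
  assumes "\<forall>i\<in>{1..n}. c i \<noteq> 0 \<and> (0 < c i \<or> odd p)"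
  shows "real_of_int (\<Sum>i=1..n. a i * Mmat p c (Suc j) i) =
    (\<Sum>i\<in>{1..n}. real_of_int (a i * sgn (c i)) * exp (ln \<bar>real_of_int (c i)\<bar> * real (p ^ j)))"
proof -
  have "real_of_int (c i ^ p ^ j) =
      real_of_int (sgn (c i)) * exp (ln \<bar>real_of_int (c i)\<bar> * real (p ^ j))" if "i \<in> {1..n}" for i
  proof (rule of_int_power_eq_sgn_mult_exp_ln)
    show "c i \<noteq> 0" "0 < c i \<or> odd (p ^ j)"
      using assms that by auto
  qed
  then show ?thesis
    by (simp add: Mmat_def mult.assoc)
qed

theorem lemma4p1:
  fixes p n :: nat and c :: "nat \<Rightarrow> int"
  assumes "prime p"
    and "\<forall>i\<in>{1..n}. c i \<noteq> 0"
    and "inj_on c {1..n}"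
    and "(\<forall>i\<in>{1..n}. c i > 0) \<or>
         (p \<noteq> 2 \<and> (\<forall>i\<in>{1..n}. \<forall>j\<in>{1..n}. i \<noteq> j \<longrightarrow> c i \<noteq> - c j))"
  shows "cols_Z_lin_indep n (Mmat p c)"
  unfolding cols_Z_lin_indep_def
proof (intro allI impI ballI)
  fix a :: "nat \<Rightarrow> int" and i
  assume rows: "\<forall>k\<in>{1..n}. (\<Sum>i=1..n. a i * Mmat p c k i) = 0" and i: "i \<in> {1..n}"
  have "1 < p"
    using assms(1) prime_gt_1_nat by blast
  have "odd p" if "p \<noteq> 2"
    using assms(1) \<open>1 < p\<close> that by (intro prime_odd_nat) auto
  then have signs: "\<forall>i\<in>{1..n}. c i \<noteq> 0 \<and> (0 < c i \<or> odd p)"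
    using assms(2,4) by blast
  have "(\<Sum>i\<in>{1..n}. real_of_int (a i * sgn (c i)) * exp (ln \<bar>real_of_int (c i)\<bar> * real (p ^ j))) = 0"
    if "j < n" for j
    using of_int_Mmat_row_combination[OF signs, where a = a and j = j] rows that
    by (simp del: of_int_sum)
  moreover have "inj_on (\<lambda>i. ln \<bar>real_of_int (c i)\<bar>) {1..n}"
    using inj_on_ln_abs_of_int inj_on_abs_if_positive_or_no_opposites assms(2-4) by blast
  moreover have "real (p ^ j) < real (p ^ Suc j)" for j
    using \<open>1 < p\<close> by simp
  ultimately have "real_of_int (a i * sgn (c i)) = 0"
    using exp_sum_zeros_imp_coeffs_zero[where a = "\<lambda>i. real_of_int (a i * sgn (c i))"
        and t = "\<lambda>j. real (p ^ j)" and I = "{1..n}"] i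
    by simp
  then show "a i = 0"
    using assms(2) i by (auto simp: sgn_0_0)
qed

end
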